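(* Let $Z_1,Z_2,\ldots$ be data in a set $\mathbb{Z}$ and $\ell:\Theta\times\mathbb{Z}\to[0,\infty)$ a loss function. Let $\widehat\theta_n$ be an $(\varepsilon,\delta)$-AERM on $Z^n=(Z_1,\ldots,Z_n)$ for all $n$, and suppose there exists $\overline\Omega$ such that $0\le\widehat\omega_n\le\overline\Omega$ for all $n\ge0$. Then for any $n$, $$\sum_{i=1}^n\widehat\omega_{i-1}\ell(\widehat\theta_i;Z_i)\le\overline\Omega\Bigl\{H_n^{(\varepsilon)}\delta+\sum_{i=1}^n\ell(\widehat\theta_n;Z_i)\Bigr\},$$ where $H_n^{(m)}=\sum_{k=1}^n k^{-m}$ is the generalized harmonic number of order $m$.
   Context: Empirical risk $\widehat R_n(\theta)=n^{-1}\sum_{i=1}^n\ell(\theta;Z_i)$. For fixed $\varepsilon,\delta\ge0$, an $(\varepsilon,\delta)$-AERM on $Z^n$ is an estimator $\widehat\theta_n$ with $\widehat R_n(\widehat\theta_n)\le\inf_{\theta\in\Theta}\widehat R_n(\theta)+\delta/n^{1+\varepsilon}$. The $\widehat\omega_n$ are (possibly data-dependent) learning rates. *)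

theory Defs
  imports Complex_Main
begin

definition emp_risk :: "('p \<Rightarrow> 'z \<Rightarrow> real) \<Rightarrow> (nat \<Rightarrow> 'z) \<Rightarrow> nat \<Rightarrow> 'p \<Rightarrow> real" where
  "emp_risk L Z n \<theta> = (\<Sum>i=1..n. L \<theta> (Z i)) / real n"

definition is_AERM :: "'p set \<Rightarrow> ('p \<Rightarrow> 'z \<Rightarrow> real) \<Rightarrow> (nat \<Rightarrow> 'z) \<Rightarrow> real \<Rightarrow> real \<Rightarrow> nat \<Rightarrow> 'p \<Rightarrow> bool" where
  "is_AERM \<Theta> L Z \<epsilon> \<delta> n \<theta>h \<longleftrightarrow> \<theta>h \<in> \<Theta> \<and>
     emp_risk L Z n \<theta>h \<le> (INF \<theta>\<in>\<Theta>. emp_risk L Z n \<theta>) + \<delta> / real n powr (1 + \<epsilon>)"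

definition gen_harmonic :: "real \<Rightarrow> nat \<Rightarrow> real" where
  "gen_harmonic m n = (\<Sum>k=1..n. real k powr (- m))"

end

theory Submission
  imports Defs
begin

text \<open>Multiplying the AERM inequality on \<open>Z\<^sup>m\<close> by \<open>m\<close> compares cumulative losses
  up to the slack \<open>\<delta> m powr (-\<epsilon>)\<close>. By the be-the-leader induction these slacks add up,
  so the cumulative loss of the sequential estimators exceeds that of any fixed parameter, in
  particular of the last estimator, by at most \<open>gen_harmonic \<epsilon> n * \<delta>\<close>. Bounding the
  learning rates by \<open>\<Omega>\<close> finishes the proof.\<close>

lemma is_AERM_sum_le:
  fixes L :: "'p \<Rightarrow> 'z \<Rightarrow> real"
  assumes loss_nonneg: "\<And>\<theta> z. \<theta> \<in> \<Theta> \<Longrightarrow> 0 \<le> L \<theta> z"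
    and aerm: "is_AERM \<Theta> L Z \<epsilon> \<delta> m t" and "\<theta> \<in> \<Theta>"
  shows "(\<Sum>i=1..m. L t (Z i)) \<le> (\<Sum>i=1..m. L \<theta> (Z i)) + \<delta> * real m powr (- \<epsilon>)"
proof (cases "m = 0")
  case True
  then show ?thesis by simp
next
  case False
  then have m_pos: "real m > 0" by simp
  have "bdd_below ((\<lambda>\<theta>. emp_risk L Z m \<theta>) ` \<Theta>)"
    by (rule bdd_belowI[where m=0])
      (auto simp: emp_risk_def intro!: divide_nonneg_nonneg sum_nonneg loss_nonneg)
  then have "(INF \<theta>\<in>\<Theta>. emp_risk L Z m \<theta>) \<le> emp_risk L Z m \<theta>"
    using \<open>\<theta> \<in> \<Theta>\<close> by (rule cINF_lower)
  with aerm have "emp_risk L Z m t \<le> emp_risk L Z m \<theta> + \<delta> / real m powr (1 + \<epsilon>)"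
    unfolding is_AERM_def by linarith
  then have "real m * emp_risk L Z m t \<le> real m * (emp_risk L Z m \<theta> + \<delta> / real m powr (1 + \<epsilon>))"
    using m_pos by simp
  moreover have "real m * (\<delta> / real m powr (1 + \<epsilon>)) = \<delta> * real m powr (- \<epsilon>)"
    using m_pos by (simp add: powr_add powr_minus field_simps)
  ultimately show ?thesis
    using m_pos by (simp add: emp_risk_def distrib_left)
qed

lemma be_the_leader_sum_le:
  fixes L :: "'p \<Rightarrow> 'z \<Rightarrow> real" and c :: "nat \<Rightarrow> real"
  assumes mem: "\<And>m. m \<ge> 1 \<Longrightarrow> \<theta>h m \<in> \<Theta>"
    and leader: "\<And>m \<theta>. m \<ge> 1 \<Longrightarrow> \<theta> \<in> \<Theta> \<Longrightarrow>
      (\<Sum>i=1..m. L (\<theta>h m) (Z i)) \<le> (\<Sum>i=1..m. L \<theta> (Z i)) + c m"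
    and "\<theta> \<in> \<Theta>"
  shows "(\<Sum>i=1..n. L (\<theta>h i) (Z i)) \<le> (\<Sum>i=1..n. L \<theta> (Z i)) + (\<Sum>k=1..n. c k)"
  using \<open>\<theta> \<in> \<Theta>\<close>
proof (induction n arbitrary: \<theta>)
  case 0
  then show ?case by simp
next
  case (Suc n)
  have "(\<Sum>i=1..n. L (\<theta>h i) (Z i)) \<le> (\<Sum>i=1..n. L (\<theta>h (Suc n)) (Z i)) + (\<Sum>k=1..n. c k)"
    using Suc.IH mem[of "Suc n"] by simp
  moreover have "(\<Sum>i=1..Suc n. L (\<theta>h (Suc n)) (Z i)) \<le> (\<Sum>i=1..Suc n. L \<theta> (Z i)) + c (Suc n)"
    using leader[of "Suc n" \<theta>] Suc.prems by simp
  ultimately show ?case by simp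
qed

theorem lemma3:
  fixes \<Theta> :: "'p set" and L :: "'p \<Rightarrow> 'z \<Rightarrow> real" and Z :: "nat \<Rightarrow> 'z"
    and \<theta>h :: "nat \<Rightarrow> 'p" and \<omega> :: "nat \<Rightarrow> real"
    and \<epsilon> \<delta> \<Omega> :: real and n :: nat
  assumes loss_nonneg: "\<And>\<theta> z. \<theta> \<in> \<Theta> \<Longrightarrow> 0 \<le> L \<theta> z"
    and eps: "0 \<le> \<epsilon>" and del: "0 \<le> \<delta>"
    and aerm: "\<And>m. m \<ge> 1 \<Longrightarrow> is_AERM \<Theta> L Z \<epsilon> \<delta> m (\<theta>h m)"
    and omega: "\<And>m. 0 \<le> \<omega> m \<and> \<omega> m \<le> \<Omega>"
  shows "(\<Sum>i=1..n. \<omega> (i - 1) * L (\<theta>h i) (Z i))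
         \<le> \<Omega> * (gen_harmonic \<epsilon> n * \<delta> + (\<Sum>i=1..n. L (\<theta>h n) (Z i)))"
proof -
  have mem: "\<And>m. m \<ge> 1 \<Longrightarrow> \<theta>h m \<in> \<Theta>"
    using aerm unfolding is_AERM_def by blast
  have "0 \<le> \<Omega>" using omega[of 0] by linarith
  have "(\<Sum>i=1..n. \<omega> (i - 1) * L (\<theta>h i) (Z i)) \<le> \<Omega> * (\<Sum>i=1..n. L (\<theta>h i) (Z i))"
    unfolding sum_distrib_left
    by (rule sum_mono) (auto intro!: mult_right_mono omega[THEN conjunct2] loss_nonneg mem)
  also have "\<dots> \<le> \<Omega> * (gen_harmonic \<epsilon> n * \<delta> + (\<Sum>i=1..n. L (\<theta>h n) (Z i)))"
  proof (cases "n = 0")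
    case True
    then show ?thesis by (simp add: gen_harmonic_def)
  next
    case False
    have "(\<Sum>i=1..n. L (\<theta>h i) (Z i)) \<le> (\<Sum>i=1..n. L (\<theta>h n) (Z i)) + (\<Sum>k=1..n. \<delta> * real k powr (- \<epsilon>))"
      using False
      by (intro be_the_leader_sum_le[where \<Theta>=\<Theta>] is_AERM_sum_le[OF loss_nonneg aerm] mem) auto
    then show ?thesis
      using \<open>0 \<le> \<Omega>\<close> by (intro mult_left_mono) (auto simp: gen_harmonic_def sum_distrib_left mult.commute)
  qed
  finally show ?thesis .
qed

end
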